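(* (i) For integers $k\geq 2$ and $n\geq 2k^2+3$, $\rho(N_{n,n}^{k-2,1})>\rho(M_{n,n}^{n-k,2})$. (ii) For integers $k\geq 2$ and $n\geq k+1$, $q(M_{n,n}^{n-k,2})>q(N_{n,n}^{k-2,1})$.
   Context: $\rho$ denotes the largest eigenvalue of the adjacency matrix and $q$ the largest eigenvalue of $D+A$ (diagonal degree matrix plus adjacency matrix). $M_{n,m}^{s,t}$: bipartite graph with parts $X=X_1\cup X_2$, $Y=Y_1\cup Y_2$, $|X_1|=s$, $|X_2|=n-s$, $|Y_1|=m-t$, $|Y_2|=t$; edges are all pairs between $X_1$ and $Y_1$, between $X_2$ and $Y_1$, and between $X_2$ and $Y_2$. $N_{n,n}^{q',1}$ (here $q'=k-2$): parts $X=X_1\cup X_2\cup X_3$, $Y=Y_1\cup Y_2\cup Y_3$, $|X_1|=|Y_1|=n-q'-2$, $|X_2|=|Y_2|=q'+1$, $|X_3|=|Y_3|=1$; edges are all pairs between $X_i$ and $Y_i$ ($i=1,2,3$), between $X_1$ and $Y_2$, between $X_2$ and $Y_1\cup Y_3$, and between $X_3$ and $Y_2$. *)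

theory Defs
  imports "Jordan_Normal_Form.Char_Poly"
begin

text \<open>Simple graphs on the vertex set {0..<N}, given by a symmetric irreflexive
edge predicate.  For a bipartite graph with parts X and Y (|X| = n, |Y| = m)
we use vertices 0..<n for X and n..<n+m for Y.\<close>

definition adj_mat :: "nat \<Rightarrow> (nat \<Rightarrow> nat \<Rightarrow> bool) \<Rightarrow> real mat" where
  "adj_mat N E = mat N N (\<lambda>(i,j). if E i j then 1 else 0)"

definition deg_mat :: "nat \<Rightarrow> (nat \<Rightarrow> nat \<Rightarrow> bool) \<Rightarrow> real mat" where
  "deg_mat N E = mat N N (\<lambda>(i,j). if i = j then real (card {v. v < N \<and> E i v}) else 0)"

definition largest_eigenvalue :: "real mat \<Rightarrow> real" where
  "largest_eigenvalue A = Max {x. eigenvalue A x}"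

definition rho :: "nat \<Rightarrow> (nat \<Rightarrow> nat \<Rightarrow> bool) \<Rightarrow> real" where
  "rho N E = largest_eigenvalue (adj_mat N E)"

definition qsl :: "nat \<Rightarrow> (nat \<Rightarrow> nat \<Rightarrow> bool) \<Rightarrow> real" where
  "qsl N E = largest_eigenvalue (deg_mat N E + adj_mat N E)"

definition sym_bip :: "(nat \<Rightarrow> nat \<Rightarrow> bool) \<Rightarrow> nat \<Rightarrow> nat \<Rightarrow> bool" where
  "sym_bip R u v = (R u v \<or> R v u)"

text \<open>M_{n,m}^{s,t}: X1 = {0..<s}, X2 = {s..<n}, Y1 = {n..<n+(m-t)},
Y2 = {n+(m-t)..<n+m}; edges X1-Y1, X2-Y1, X2-Y2.\<close>
definition M_rel :: "nat \<Rightarrow> nat \<Rightarrow> nat \<Rightarrow> nat \<Rightarrow> nat \<Rightarrow> nat \<Rightarrow> bool" where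
  "M_rel n m s t x y =
     (x < n \<and> n \<le> y \<and> y < n + m \<and>
      ((x < s \<and> y < n + (m - t)) \<or>
       (s \<le> x \<and> y < n + (m - t)) \<or>
       (s \<le> x \<and> n + (m - t) \<le> y)))"

definition M_graph :: "nat \<Rightarrow> nat \<Rightarrow> nat \<Rightarrow> nat \<Rightarrow> nat \<Rightarrow> nat \<Rightarrow> bool" where
  "M_graph n m s t = sym_bip (M_rel n m s t)"

text \<open>N_{n,n}^{q,1}: blocks of sizes n-q-2, q+1, 1 on each side.
Block index of an X-vertex x (0 \<le> x < n) and of a Y-vertex y (n \<le> y < 2n).\<close>
definition N_block :: "nat \<Rightarrow> nat \<Rightarrow> nat \<Rightarrow> nat" where
  "N_block n q i = (if i < n - q - 2 then 1 else if i < n - 1 then 2 else 3)"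

definition N_rel :: "nat \<Rightarrow> nat \<Rightarrow> nat \<Rightarrow> nat \<Rightarrow> bool" where
  "N_rel n q x y =
     (x < n \<and> n \<le> y \<and> y < n + n \<and>
      (N_block n q x, N_block n q (y - n)) \<in>
        {(1,1), (2,2), (3,3), (1,2), (2,1), (2,3), (3,2)})"

definition N_graph :: "nat \<Rightarrow> nat \<Rightarrow> nat \<Rightarrow> nat \<Rightarrow> bool" where
  "N_graph n q = sym_bip (N_rel n q)"

end

theory Submission
  imports Defs "Jordan_Normal_Form.Spectral_Radius"
begin

(* Both graphs have equitable partitions into a handful of parts, so the adjacency and
   signless Laplacian matrices map vectors constant on parts to vectors constant on parts,
   and every eigenvalue of the small quotient matrix is an eigenvalue of the graph.
   (i) A positive part-constant vector w with A(M) w \<le> (n - 1) w bounds rho(M) by n - 1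
   (Collatz-Wielandt; this is where n \<ge> 2k^2 + 3 is needed), while the quotient cubic
   of A(N) changes sign on (n - 1, n).
   (ii) The quotient cubic of Q(N) has a root l in (2n - 2, 2n) with a positive
   eigenvector, so q(N) = l; the quotient quartic of Q(M) equals
   x p(x) + x (x - n) (x - 2n) for that cubic p, hence is negative at l and positive at 3n,
   which yields a larger eigenvalue of Q(M). *)

section \<open>Matrices acting on vectors that are constant on parts\<close>

lemma sum_group_by_block:
  fixes h :: "nat \<Rightarrow> 'a::comm_semiring_1" and b :: "nat \<Rightarrow> nat"
  assumes "\<forall>j<N. b j < B"
  shows "(\<Sum>j<N. h (b j)) = (\<Sum>\<beta><B. of_nat (card {j. j < N \<and> b j = \<beta>}) * h \<beta>)"
proof -
  have "(\<Sum>j<N. h (b j)) = (\<Sum>\<beta><B. \<Sum>j\<in>{j \<in> {..<N}. b j = \<beta>}. h (b j))"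
    by (rule sum.group[symmetric]) (use assms in auto)
  also have "\<dots> = (\<Sum>\<beta><B. \<Sum>j\<in>{j \<in> {..<N}. b j = \<beta>}. h \<beta>)"
    by (intro sum.cong) auto
  also have "\<dots> = (\<Sum>\<beta><B. of_nat (card {j. j < N \<and> b j = \<beta>}) * h \<beta>)"
    by simp
  finally show ?thesis .
qed

lemma mult_mat_vec_index_sum:
  assumes "A \<in> carrier_mat N N" "v \<in> carrier_vec N" "i < N"
  shows "(A *\<^sub>v v) $ i = (\<Sum>j<N. A $$ (i, j) * v $ j)"
  using assms by (auto simp: scalar_prod_def atLeast0LessThan intro: sum.cong)

lemma adj_mat_carrier [simp]: "adj_mat N E \<in> carrier_mat N N"
  by (simp add: adj_mat_def)

lemma deg_mat_carrier [simp]: "deg_mat N E \<in> carrier_mat N N"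
  by (simp add: deg_mat_def)

lemma adj_mat_mult_block_vec:
  fixes b :: "nat \<Rightarrow> nat"
  assumes E: "\<forall>i<N. \<forall>j<N. E i j = R (b i) (b j)"
    and b: "\<forall>j<N. b j < B" and i: "i < N"
  shows "(adj_mat N E *\<^sub>v vec N (\<lambda>j. f (b j))) $ i =
    (\<Sum>\<beta><B. if R (b i) \<beta> then real (card {j. j < N \<and> b j = \<beta>}) * f \<beta> else 0)"
proof -
  have "(adj_mat N E *\<^sub>v vec N (\<lambda>j. f (b j))) $ i
      = (\<Sum>j<N. adj_mat N E $$ (i, j) * vec N (\<lambda>j. f (b j)) $ j)"
    using i by (intro mult_mat_vec_index_sum) auto
  also have "\<dots> = (\<Sum>j<N. if R (b i) (b j) then f (b j) else 0)"
    using i E by (intro sum.cong) (auto simp: adj_mat_def)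
  also have "\<dots> = (\<Sum>\<beta><B. real (card {j. j < N \<and> b j = \<beta>}) * (if R (b i) \<beta> then f \<beta> else 0))"
    by (rule sum_group_by_block[OF b])
  also have "\<dots> = (\<Sum>\<beta><B. if R (b i) \<beta> then real (card {j. j < N \<and> b j = \<beta>}) * f \<beta> else 0)"
    by (intro sum.cong) auto
  finally show ?thesis .
qed

lemma card_neighbours_block:
  fixes b :: "nat \<Rightarrow> nat"
  assumes E: "\<forall>i<N. \<forall>j<N. E i j = R (b i) (b j)"
    and b: "\<forall>j<N. b j < B" and i: "i < N"
  shows "card {v. v < N \<and> E i v} =
    (\<Sum>\<beta><B. if R (b i) \<beta> then card {j. j < N \<and> b j = \<beta>} else 0)"
proof -
  have "card {v. v < N \<and> E i v} = card {j \<in> {..<N}. R (b i) (b j)}"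
    using i E by (intro arg_cong[where f = card]) auto
  also have "\<dots> = (\<Sum>j<N. if R (b i) (b j) then 1 else 0)"
    by (subst sum.inter_filter[symmetric]) simp_all
  also have "\<dots> = (\<Sum>\<beta><B. of_nat (card {j. j < N \<and> b j = \<beta>}) * (if R (b i) \<beta> then 1 else 0))"
    by (rule sum_group_by_block[OF b])
  also have "\<dots> = (\<Sum>\<beta><B. if R (b i) \<beta> then card {j. j < N \<and> b j = \<beta>} else 0)"
    by (intro sum.cong) auto
  finally show ?thesis .
qed

lemma signless_laplacian_mult_vec_index:
  assumes i: "i < N" and v: "v \<in> carrier_vec N"
  shows "((deg_mat N E + adj_mat N E) *\<^sub>v v) $ i =
    real (card {u. u < N \<and> E i u}) * v $ i + (adj_mat N E *\<^sub>v v) $ i"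
proof -
  have D: "deg_mat N E \<in> carrier_mat N N" and A: "adj_mat N E \<in> carrier_mat N N"
    by simp_all
  have "(deg_mat N E *\<^sub>v v) $ i = (\<Sum>j<N. deg_mat N E $$ (i, j) * v $ j)"
    by (rule mult_mat_vec_index_sum[OF D v i])
  also have "\<dots> = (\<Sum>j<N. if i = j then real (card {u. u < N \<and> E i u}) * v $ i else 0)"
    using i by (intro sum.cong) (auto simp: deg_mat_def)
  finally have deg: "(deg_mat N E *\<^sub>v v) $ i = real (card {u. u < N \<and> E i u}) * v $ i"
    using i by simp
  have "((deg_mat N E + adj_mat N E) *\<^sub>v v) $ i = (deg_mat N E *\<^sub>v v) $ i + (adj_mat N E *\<^sub>v v) $ i"
    using i v by (simp add: add_mult_distrib_mat_vec[OF D A v] carrier_matD[OF A])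
  then show ?thesis by (simp only: deg)
qed

lemma finite_eigenvalues:
  "(A :: 'a :: field mat) \<in> carrier_mat N N \<Longrightarrow> finite {x. eigenvalue A x}"
  using card_finite_spectrum(1) unfolding spectrum_def by blast

lemma eigenvalue_le_largest_eigenvalue:
  "A \<in> carrier_mat N N \<Longrightarrow> eigenvalue A x \<Longrightarrow> x \<le> largest_eigenvalue A"
  unfolding largest_eigenvalue_def using finite_eigenvalues by (intro Max_ge) auto

lemma largest_eigenvalue_le:
  assumes "A \<in> carrier_mat N N" "eigenvalue A x0" "\<And>x. eigenvalue A x \<Longrightarrow> x \<le> c"
  shows "largest_eigenvalue A \<le> c"
  unfolding largest_eigenvalue_def using finite_eigenvalues[OF assms(1)] assms(2,3)
  by (subst Max_le_iff) auto

lemma eigenvalue_vecI: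
  assumes A: "(A :: real mat) \<in> carrier_mat N N"
    and eq: "\<forall>i<N. (A *\<^sub>v vec N g) $ i = l * g i" and j: "j < N" "g j \<noteq> 0"
  shows "eigenvalue A l"
proof -
  have "A *\<^sub>v vec N g = l \<cdot>\<^sub>v vec N g" using A eq by (intro eq_vecI) auto
  moreover have "vec N g \<noteq> 0\<^sub>v N" using j by (metis index_vec index_zero_vec(1))
  ultimately show ?thesis unfolding eigenvalue_def eigenvector_def using A by (intro exI[of _ "vec N g"]) auto
qed

text \<open>Collatz-Wielandt: compare an eigenvector v with w at an index maximising |v_i| / w_i.\<close>
lemma eigenvalue_le_of_positive_supervector:
  fixes A :: "real mat"
  assumes A: "A \<in> carrier_mat N N" and nonneg: "\<forall>i<N. \<forall>j<N. A $$ (i, j) \<ge> 0"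
    and w: "w \<in> carrier_vec N" and w_pos: "\<forall>i<N. w $ i > 0"
    and Aw: "\<forall>i<N. (A *\<^sub>v w) $ i \<le> c * w $ i"
    and ev: "eigenvalue A l"
  shows "l \<le> c"
proof -
  obtain v where v: "v \<in> carrier_vec N" "v \<noteq> 0\<^sub>v N" "A *\<^sub>v v = l \<cdot>\<^sub>v v"
    using ev A unfolding eigenvalue_def eigenvector_def by auto
  obtain i1 where i1: "i1 < N" "v $ i1 \<noteq> 0"
    using v(1,2) by (metis eq_vecI carrier_vecD index_zero_vec)
  define r where "r = Max ((\<lambda>i. \<bar>v $ i\<bar> / w $ i) ` {..<N})"
  have "r \<in> (\<lambda>i. \<bar>v $ i\<bar> / w $ i) ` {..<N}"
    unfolding r_def using i1 by (intro Max_in) auto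
  then obtain i0 where i0: "i0 < N" "r = \<bar>v $ i0\<bar> / w $ i0" by auto
  have ratio_le: "\<bar>v $ j\<bar> / w $ j \<le> r" if "j < N" for j
    unfolding r_def using that by (intro Max_ge) auto
  have bound: "\<bar>v $ j\<bar> \<le> r * w $ j" if "j < N" for j
    using ratio_le[OF that] that w_pos by (simp add: divide_le_eq)
  have "0 < \<bar>v $ i1\<bar> / w $ i1" using i1 w_pos by simp
  with ratio_le[OF i1(1)] have r_pos: "r > 0" by linarith
  have v_i0: "\<bar>v $ i0\<bar> = r * w $ i0" using i0 w_pos by auto
  have "\<bar>l\<bar> * \<bar>v $ i0\<bar> = \<bar>(A *\<^sub>v v) $ i0\<bar>" using v i0 by (simp add: abs_mult)
  also have "\<dots> = \<bar>\<Sum>j<N. A $$ (i0, j) * v $ j\<bar>" by (simp add: mult_mat_vec_index_sum[OF A v(1) i0(1)])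
  also have "\<dots> \<le> (\<Sum>j<N. A $$ (i0, j) * (r * w $ j))"
    using nonneg i0(1) bound by (intro order.trans[OF sum_abs] sum_mono) (auto simp: abs_mult mult_left_mono)
  also have "\<dots> = r * (A *\<^sub>v w) $ i0"
    by (simp add: mult_mat_vec_index_sum[OF A w i0(1)] sum_distrib_left mult_ac)
  also have "\<dots> \<le> c * \<bar>v $ i0\<bar>"
    using Aw i0 r_pos v_i0 by (simp add: mult_left_mono mult.left_commute)
  finally have "\<bar>l\<bar> * \<bar>v $ i0\<bar> \<le> c * \<bar>v $ i0\<bar>" .
  moreover have "\<bar>v $ i0\<bar> > 0" unfolding v_i0 using r_pos w_pos i0(1) by simp
  ultimately show ?thesis by simp
qed

lemma largest_eigenvalue_le_of_positive_supervector:
  fixes A :: "real mat"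
  assumes "A \<in> carrier_mat N N" "\<forall>i<N. \<forall>j<N. A $$ (i, j) \<ge> 0"
    and "w \<in> carrier_vec N" "\<forall>i<N. w $ i > 0" "\<forall>i<N. (A *\<^sub>v w) $ i \<le> c * w $ i"
    and "eigenvalue A x0"
  shows "largest_eigenvalue A \<le> c"
  using largest_eigenvalue_le[OF assms(1,6)] eigenvalue_le_of_positive_supervector[OF assms(1-5)]
  by blast

lemma continuous_sign_change_root:
  fixes p :: "real \<Rightarrow> real"
  assumes "continuous_on {a..b} p" "p a < 0" "p b > 0" "a \<le> b"
  shows "\<exists>x. a < x \<and> x < b \<and> p x = 0"
proof -
  obtain x where "a \<le> x" "x \<le> b" "p x = 0"
    using IVT'[of p a 0 b] assms by force
  moreover have "x \<noteq> a" "x \<noteq> b" using calculation assms by auto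
  ultimately show ?thesis by force
qed

text \<open>Parts X1, X2, Y1 of M, and the two vertices of Y2 as separate parts 3 and 4, so that
  the eigenvector for 0 below is constant on parts.\<close>
definition M_part :: "nat \<Rightarrow> nat \<Rightarrow> nat \<Rightarrow> nat" where
  "M_part n k j =
    (if j < n - k then 0 else if j < n then 1 else if j < 2*n - 2 then 2 else if j < 2*n - 1 then 3 else 4)"

definition M_part_adj :: "nat \<Rightarrow> nat \<Rightarrow> bool" where
  "M_part_adj x y = ((x, y) \<in> {(0,2), (1,2), (1,3), (1,4), (2,0), (2,1), (3,1), (4,1)})"

lemma M_part_cases:
  "M_part n k j = 0 \<or> M_part n k j = 1 \<or> M_part n k j = 2 \<or> M_part n k j = 3 \<or> M_part n k j = 4"
  by (simp add: M_part_def)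

lemma M_part_less: "M_part n k j < 5"
  using M_part_cases[of n k j] by auto

lemma M_graph_eq_part_adj:
  assumes "2 \<le> k" "k < n" "i < 2*n" "j < 2*n"
  shows "M_graph n n (n - k) 2 i j = M_part_adj (M_part n k i) (M_part n k j)"
  using assms unfolding M_graph_def sym_bip_def M_rel_def M_part_def M_part_adj_def by auto

lemma card_M_part:
  assumes "2 \<le> k" "k < n"
  shows "card {j. j < 2*n \<and> M_part n k j = 0} = n - k"
    and "card {j. j < 2*n \<and> M_part n k j = 1} = k"
    and "card {j. j < 2*n \<and> M_part n k j = 2} = n - 2"
    and "card {j. j < 2*n \<and> M_part n k j = 3} = 1"
    and "card {j. j < 2*n \<and> M_part n k j = 4} = 1"
proof -
  have "{j. j < 2*n \<and> M_part n k j = 0} = {..<n - k}"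
    and "{j. j < 2*n \<and> M_part n k j = 1} = {n - k..<n}"
    and "{j. j < 2*n \<and> M_part n k j = 2} = {n..<2*n - 2}"
    and "{j. j < 2*n \<and> M_part n k j = 3} = {2*n - 2}"
    and "{j. j < 2*n \<and> M_part n k j = 4} = {2*n - 1}"
    using assms by (auto simp: M_part_def)
  then show "card {j. j < 2*n \<and> M_part n k j = 0} = n - k"
    and "card {j. j < 2*n \<and> M_part n k j = 1} = k"
    and "card {j. j < 2*n \<and> M_part n k j = 2} = n - 2"
    and "card {j. j < 2*n \<and> M_part n k j = 3} = 1"
    and "card {j. j < 2*n \<and> M_part n k j = 4} = 1"
    using assms by simp_all
qed

definition N_part :: "nat \<Rightarrow> nat \<Rightarrow> nat \<Rightarrow> nat" where
  "N_part n k j = (if j < n - k then 0 else if j < n - 1 then 1 else if j < n then 2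
     else if j < 2*n - k then 3 else if j < 2*n - 1 then 4 else 5)"

definition N_part_adj :: "nat \<Rightarrow> nat \<Rightarrow> bool" where
  "N_part_adj x y = ((x, y) \<in> {(0,3), (1,4), (2,5), (0,4), (1,3), (1,5), (2,4),
                                (3,0), (4,1), (5,2), (4,0), (3,1), (5,1), (4,2)})"

lemma N_part_cases:
  "N_part n k j = 0 \<or> N_part n k j = 1 \<or> N_part n k j = 2 \<or>
   N_part n k j = 3 \<or> N_part n k j = 4 \<or> N_part n k j = 5"
  by (simp add: N_part_def)

lemma N_part_less: "N_part n k j < 6"
  using N_part_cases[of n k j] by auto

lemma N_part_less_3_iff: "N_part n k j < 3 \<longleftrightarrow> j < n"
  by (simp add: N_part_def) arith

lemma N_part_adj_sym: "N_part_adj x y = N_part_adj y x"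
  by (auto simp: N_part_adj_def)

lemma N_part_adj_crosses: "N_part_adj x y \<Longrightarrow> x < 3 \<longleftrightarrow> \<not> y < 3"
  by (auto simp: N_part_adj_def)

lemma N_block_cases: "N_block n q i = 1 \<or> N_block n q i = 2 \<or> N_block n q i = 3"
  by (auto simp: N_block_def)

lemma N_rel_eq_part_adj:
  assumes k: "2 \<le> k" "k < n" and ij: "i < n" "n \<le> j" "j < 2*n"
  shows "N_rel n (k - 2) i j = N_part_adj (N_part n k i) (N_part n k j)"
proof -
  have X: "N_part n k i = N_block n (k - 2) i - 1"
    using k ij(1) by (auto simp: N_block_def N_part_def)
  have Y: "N_part n k j = N_block n (k - 2) (j - n) + 2"
    using k ij(2,3) by (auto simp: N_block_def N_part_def)
  show ?thesis
    using N_block_cases[of n "k - 2" i] N_block_cases[of n "k - 2" "j - n"]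
    unfolding N_rel_def N_part_adj_def X Y using ij by (elim disjE) simp_all
qed

lemma N_graph_eq_part_adj:
  assumes k: "2 \<le> k" "k < n" and ij: "i < 2*n" "j < 2*n"
  shows "N_graph n (k - 2) i j = N_part_adj (N_part n k i) (N_part n k j)"
proof -
  consider "i < n" "n \<le> j" | "j < n" "n \<le> i" | "i < n \<longleftrightarrow> j < n" by linarith
  then show ?thesis
  proof cases
    case 1
    then have "\<not> N_rel n (k - 2) j i" by (simp add: N_rel_def)
    with 1 show ?thesis using N_rel_eq_part_adj[OF k 1 ij(2)] by (simp add: N_graph_def sym_bip_def)
  next
    case 2
    then have "\<not> N_rel n (k - 2) i j" by (simp add: N_rel_def)
    with 2 show ?thesis using N_rel_eq_part_adj[OF k 2 ij(1)] N_part_adj_sym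
      by (simp add: N_graph_def sym_bip_def)
  next
    case 3
    then have "\<not> N_rel n (k - 2) i j" "\<not> N_rel n (k - 2) j i" by (auto simp: N_rel_def)
    moreover have "\<not> N_part_adj (N_part n k i) (N_part n k j)"
      using 3 N_part_adj_crosses N_part_less_3_iff by blast
    ultimately show ?thesis by (simp add: N_graph_def sym_bip_def)
  qed
qed

lemma card_N_part:
  assumes "2 \<le> k" "k < n"
  shows "card {j. j < 2*n \<and> N_part n k j = 0} = n - k"
    and "card {j. j < 2*n \<and> N_part n k j = 1} = k - 1"
    and "card {j. j < 2*n \<and> N_part n k j = 2} = 1"
    and "card {j. j < 2*n \<and> N_part n k j = 3} = n - k"
    and "card {j. j < 2*n \<and> N_part n k j = 4} = k - 1"
    and "card {j. j < 2*n \<and> N_part n k j = 5} = 1"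
proof -
  have "{j. j < 2*n \<and> N_part n k j = 0} = {..<n - k}"
    and "{j. j < 2*n \<and> N_part n k j = 1} = {n - k..<n - 1}"
    and "{j. j < 2*n \<and> N_part n k j = 2} = {n - 1}"
    and "{j. j < 2*n \<and> N_part n k j = 3} = {n..<2*n - k}"
    and "{j. j < 2*n \<and> N_part n k j = 4} = {2*n - k..<2*n - 1}"
    and "{j. j < 2*n \<and> N_part n k j = 5} = {2*n - 1}"
    using assms by (auto simp: N_part_def)
  then show "card {j. j < 2*n \<and> N_part n k j = 0} = n - k"
    and "card {j. j < 2*n \<and> N_part n k j = 1} = k - 1"
    and "card {j. j < 2*n \<and> N_part n k j = 2} = 1"
    and "card {j. j < 2*n \<and> N_part n k j = 3} = n - k"
    and "card {j. j < 2*n \<and> N_part n k j = 4} = k - 1"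
    and "card {j. j < 2*n \<and> N_part n k j = 5} = 1"
    using assms by simp_all
qed

lemma sum_lessThan_5: "(\<Sum>\<beta><5::nat. g \<beta>) = g 0 + g 1 + g 2 + g 3 + g 4"
  by (simp add: eval_nat_numeral)

lemma sum_lessThan_6: "(\<Sum>\<beta><6::nat. g \<beta>) = g 0 + g 1 + g 2 + g 3 + g 4 + g 5"
  by (simp add: eval_nat_numeral)

lemma adj_M_graph_mult_part_vec:
  assumes k: "2 \<le> k" "k < n" and i: "i < 2*n"
  shows "(adj_mat (2*n) (M_graph n n (n - k) 2) *\<^sub>v vec (2*n) (\<lambda>j. f (M_part n k j))) $ i =
    (if M_part n k i = 0 then (real n - 2) * f 2
     else if M_part n k i = 1 then (real n - 2) * f 2 + f 3 + f 4
     else if M_part n k i = 2 then (real n - real k) * f 0 + real k * f 1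
     else real k * f 1)"
proof -
  have E: "\<forall>i<2*n. \<forall>j<2*n. M_graph n n (n - k) 2 i j = M_part_adj (M_part n k i) (M_part n k j)"
    using M_graph_eq_part_adj[OF k] by blast
  have b: "\<forall>j<2*n. M_part n k j < 5" by (simp add: M_part_less)
  show ?thesis
    unfolding adj_mat_mult_block_vec[where E = "M_graph n n (n - k) 2" and R = M_part_adj and b = "M_part n k",
        OF E b i] sum_lessThan_5 card_M_part[OF k]
    using M_part_cases[of n k i] k by (auto simp: M_part_adj_def of_nat_diff)
qed

lemma card_M_graph_neighbours:
  assumes k: "2 \<le> k" "k < n" and i: "i < 2*n"
  shows "card {v. v < 2*n \<and> M_graph n n (n - k) 2 i v} =
    (if M_part n k i = 0 then n - 2 else if M_part n k i = 1 \<or> M_part n k i = 2 then n else k)"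
proof -
  have E: "\<forall>i<2*n. \<forall>j<2*n. M_graph n n (n - k) 2 i j = M_part_adj (M_part n k i) (M_part n k j)"
    using M_graph_eq_part_adj[OF k] by blast
  have b: "\<forall>j<2*n. M_part n k j < 5" by (simp add: M_part_less)
  show ?thesis
    unfolding card_neighbours_block[where E = "M_graph n n (n - k) 2" and R = M_part_adj and b = "M_part n k",
        OF E b i] sum_lessThan_5 card_M_part[OF k]
    using M_part_cases[of n k i] k by (auto simp: M_part_adj_def)
qed

lemma signless_M_graph_mult_part_vec:
  assumes k: "2 \<le> k" "k < n" and i: "i < 2*n"
  shows "((deg_mat (2*n) (M_graph n n (n - k) 2) + adj_mat (2*n) (M_graph n n (n - k) 2))
      *\<^sub>v vec (2*n) (\<lambda>j. f (M_part n k j))) $ i =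
    (if M_part n k i = 0 then (real n - 2) * f 0 + (real n - 2) * f 2
     else if M_part n k i = 1 then real n * f 1 + (real n - 2) * f 2 + f 3 + f 4
     else if M_part n k i = 2 then real n * f 2 + (real n - real k) * f 0 + real k * f 1
     else real k * f (M_part n k i) + real k * f 1)"
  unfolding signless_laplacian_mult_vec_index[OF i vec_carrier] adj_M_graph_mult_part_vec[OF k i]
    card_M_graph_neighbours[OF k i]
  using i k by (auto simp: of_nat_diff)

lemma adj_N_graph_mult_part_vec:
  assumes k: "2 \<le> k" "k < n" and i: "i < 2*n"
  shows "(adj_mat (2*n) (N_graph n (k - 2)) *\<^sub>v vec (2*n) (\<lambda>j. f (N_part n k j))) $ i =
    (if N_part n k i = 0 then (real n - real k) * f 3 + (real k - 1) * f 4
     else if N_part n k i = 1 then (real n - real k) * f 3 + (real k - 1) * f 4 + f 5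
     else if N_part n k i = 2 then (real k - 1) * f 4 + f 5
     else if N_part n k i = 3 then (real n - real k) * f 0 + (real k - 1) * f 1
     else if N_part n k i = 4 then (real n - real k) * f 0 + (real k - 1) * f 1 + f 2
     else (real k - 1) * f 1 + f 2)"
proof -
  have E: "\<forall>i<2*n. \<forall>j<2*n. N_graph n (k - 2) i j = N_part_adj (N_part n k i) (N_part n k j)"
    using N_graph_eq_part_adj[OF k] by blast
  have b: "\<forall>j<2*n. N_part n k j < 6" by (simp add: N_part_less)
  show ?thesis
    unfolding adj_mat_mult_block_vec[where E = "N_graph n (k - 2)" and R = N_part_adj and b = "N_part n k",
        OF E b i] sum_lessThan_6 card_N_part[OF k]
    using N_part_cases[of n k i] k by (auto simp: N_part_adj_def of_nat_diff)
qed

lemma card_N_graph_neighbours: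
  assumes k: "2 \<le> k" "k < n" and i: "i < 2*n"
  shows "card {v. v < 2*n \<and> N_graph n (k - 2) i v} =
    (if N_part n k i = 0 \<or> N_part n k i = 3 then n - 1
     else if N_part n k i = 1 \<or> N_part n k i = 4 then n else k)"
proof -
  have E: "\<forall>i<2*n. \<forall>j<2*n. N_graph n (k - 2) i j = N_part_adj (N_part n k i) (N_part n k j)"
    using N_graph_eq_part_adj[OF k] by blast
  have b: "\<forall>j<2*n. N_part n k j < 6" by (simp add: N_part_less)
  show ?thesis
    unfolding card_neighbours_block[where E = "N_graph n (k - 2)" and R = N_part_adj and b = "N_part n k",
        OF E b i] sum_lessThan_6 card_N_part[OF k]
    using N_part_cases[of n k i] k by (auto simp: N_part_adj_def)
qed

lemma signless_N_graph_mult_part_vec: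
  assumes k: "2 \<le> k" "k < n" and i: "i < 2*n"
  shows "((deg_mat (2*n) (N_graph n (k - 2)) + adj_mat (2*n) (N_graph n (k - 2)))
      *\<^sub>v vec (2*n) (\<lambda>j. f (N_part n k j))) $ i =
    (if N_part n k i = 0 then (real n - 1) * f 0 + (real n - real k) * f 3 + (real k - 1) * f 4
     else if N_part n k i = 1 then real n * f 1 + (real n - real k) * f 3 + (real k - 1) * f 4 + f 5
     else if N_part n k i = 2 then real k * f 2 + (real k - 1) * f 4 + f 5
     else if N_part n k i = 3 then (real n - 1) * f 3 + (real n - real k) * f 0 + (real k - 1) * f 1
     else if N_part n k i = 4 then real n * f 4 + (real n - real k) * f 0 + (real k - 1) * f 1 + f 2
     else real k * f 5 + (real k - 1) * f 1 + f 2)"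
  unfolding signless_laplacian_mult_vec_index[OF i vec_carrier] adj_N_graph_mult_part_vec[OF k i]
    card_N_graph_neighbours[OF k i]
  using i k N_part_cases[of n k i] by (auto simp: of_nat_diff)

section \<open>Adjacency spectral radii\<close>

lemma eigenvalue_0_adj_M_graph:
  assumes k: "2 \<le> k" "k < n"
  shows "eigenvalue (adj_mat (2*n) (M_graph n n (n - k) 2)) 0"
proof -
  define g :: "nat \<Rightarrow> real" where "g \<beta> = (if \<beta> = 3 then 1 else if \<beta> = 4 then -1 else 0)" for \<beta>
  have g: "g 0 = 0" "g 1 = 0" "g 2 = 0" "g 3 + g 4 = 0" by (simp_all add: g_def)
  let ?A = "adj_mat (2*n) (M_graph n n (n - k) 2)"
  have "\<forall>i<2*n. (?A *\<^sub>v vec (2*n) (\<lambda>j. g (M_part n k j))) $ i = 0 * g (M_part n k i)"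
    using k g by (auto simp: adj_M_graph_mult_part_vec)
  moreover have "M_part n k (2*n - 2) = 3" unfolding M_part_def using k by presburger
  ultimately show ?thesis
    using k by (intro eigenvalue_vecI[where g = "\<lambda>j. g (M_part n k j)" and j = "2*n - 2"])
      (auto simp: g_def)
qed

lemma rho_M_graph_le:
  assumes k: "2 \<le> k" and n: "2 * k^2 + 3 \<le> n"
  shows "rho (2*n) (M_graph n n (n - k) 2) \<le> real n - 1"
proof -
  have "k \<le> k^2" by (simp add: power2_eq_square)
  with n have kn: "k < n" and n3: "3 \<le> n" by linarith+
  have "real (2 * k^2 + 3) \<le> real n" using n by (simp only: of_nat_le_iff)
  then have rk: "real k \<ge> 2" and rn: "real n \<ge> 2 * real k ^ 2 + 3"
    using k by simp_all
  define t where "t = real n - 1"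
  define D where "D = real k * real n - 2 * real k + 1"
  (* On every part except X2 the block vector f satisfies A f = t f exactly; on X2 the slack
     is n (n - 2 - 2k^2) + 4k^2 - 2k + 1. *)
  define f where "f \<beta> = (if \<beta> = 0 then t * (real n - 2) * real k else if \<beta> = 1 then t * D
     else if \<beta> = 2 then (real n - real k) * (real n - 2) * real k + real k * D else real k * D)"
    for \<beta> :: nat
  have "real k * 3 \<le> real k * real n" using n3 by (intro mult_left_mono) auto
  then have "D > 0" unfolding D_def by simp
  then have f_pos: "f \<beta> > 0" for \<beta>
    using rk rn kn n3 unfolding f_def t_def by (auto intro!: mult_pos_pos add_pos_pos)
  have "2 * real k \<le> real k * real k" using rk by (intro mult_right_mono) auto
  then have "4 * real k ^ 2 - 2 * real k + 1 > 0" unfolding power2_eq_square by linarith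
  moreover have "real n * (real n - 2 - 2 * real k ^ 2) \<ge> 0" using rn by simp
  moreover have "t * f 1 - ((real n - 2) * f 2 + f 3 + f 4)
      = real n * (real n - 2 - 2 * real k ^ 2) + 4 * real k ^ 2 - 2 * real k + 1"
    unfolding f_def t_def D_def by (simp add: algebra_simps power2_eq_square)
  ultimately have row1: "(real n - 2) * f 2 + f 3 + f 4 \<le> t * f 1" by linarith
  have rows: "(real n - 2) * f 2 = t * f 0" "(real n - real k) * f 0 + real k * f 1 = t * f 2"
    "real k * f 1 = t * f 3" "f 4 = f 3"
    unfolding f_def t_def D_def by (simp_all add: algebra_simps)
  let ?A = "adj_mat (2*n) (M_graph n n (n - k) 2)"
  have "(?A *\<^sub>v vec (2*n) (\<lambda>j. f (M_part n k j))) $ i \<le> t * vec (2*n) (\<lambda>j. f (M_part n k j)) $ i"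
    if "i < 2*n" for i
    using M_part_cases[of n k i] that k kn row1 rows
    by (elim disjE) (simp_all add: adj_M_graph_mult_part_vec)
  then have "largest_eigenvalue ?A \<le> t"
    using eigenvalue_0_adj_M_graph[OF k kn] f_pos
    by (intro largest_eigenvalue_le_of_positive_supervector[where N = "2*n" and
          w = "vec (2*n) (\<lambda>j. f (M_part n k j))"]) (auto simp: adj_mat_def)
  then show ?thesis unfolding rho_def t_def .
qed

text \<open>Characteristic polynomial of the quotient matrix of A(N) on vectors taking the same value on
  X_i and Y_i.\<close>
definition N_adj_poly :: "nat \<Rightarrow> nat \<Rightarrow> real \<Rightarrow> real" where
  "N_adj_poly n k x = (x - (real k - 1)) * (x - (real n - real k)) * (x - 1)
     - (real n - real k) * (real k - 1) * (x - 1) - (real k - 1) * (x - (real n - real k))"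

lemma N_adj_poly_root:
  assumes "2 \<le> k" "k < n"
  shows "\<exists>l. real n - 1 < l \<and> l < real n \<and> N_adj_poly n k l = 0"
proof (rule continuous_sign_change_root)
  show "N_adj_poly n k (real n - 1) < 0"
    using assms unfolding N_adj_poly_def by (simp add: algebra_simps power2_eq_square[symmetric])
  have "N_adj_poly n k (real n) = (real n - real k) * (real n + real k - 1)"
    unfolding N_adj_poly_def by (simp add: algebra_simps)
  then show "N_adj_poly n k (real n) > 0"
    using assms by simp
  show "continuous_on {real n - 1..real n} (N_adj_poly n k)"
    unfolding N_adj_poly_def by (intro continuous_intros)
qed simp

lemma eigenvalue_adj_N_graph_of_root:
  assumes k: "2 \<le> k" "k < n" and l: "real n - 1 < l" "N_adj_poly n k l = 0"
  shows "eigenvalue (adj_mat (2*n) (N_graph n (k - 2))) l"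
proof -
  define h where "h \<beta> = (if \<beta> = 0 \<or> \<beta> = 3 then (real k - 1) * (l - 1)
     else if \<beta> = 1 \<or> \<beta> = 4 then (l - (real n - real k)) * (l - 1)
     else (real k - 1) * (l - (real n - real k)))" for \<beta> :: nat
  have h_sym: "h 3 = h 0" "h 4 = h 1" "h 5 = h 2" by (simp_all add: h_def)
  have rows: "(real n - real k) * h 0 + (real k - 1) * h 1 = l * h 0"
    "(real n - real k) * h 0 + (real k - 1) * h 1 + h 2 = l * h 1"
    "(real k - 1) * h 1 + h 2 = l * h 2"
    using l(2) unfolding h_def N_adj_poly_def by (simp_all add: algebra_simps)
  let ?A = "adj_mat (2*n) (N_graph n (k - 2))"
  have "(?A *\<^sub>v vec (2*n) (\<lambda>j. h (N_part n k j))) $ i = l * h (N_part n k i)" if "i < 2*n" for i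
    using N_part_cases[of n k i] that k rows
    by (elim disjE) (simp_all add: adj_N_graph_mult_part_vec h_sym)
  moreover have "h 1 \<noteq> 0" using l k unfolding h_def by simp
  moreover have "N_part n k (n - k) = 1" using k by (simp add: N_part_def)
  ultimately show ?thesis
    using k by (intro eigenvalue_vecI[where N = "2*n" and g = "\<lambda>j. h (N_part n k j)" and j = "n - k"]) auto
qed

lemma rho_N_graph_gt:
  assumes "2 \<le> k" "k < n"
  shows "rho (2*n) (N_graph n (k - 2)) > real n - 1"
proof -
  obtain l where l: "real n - 1 < l" "N_adj_poly n k l = 0"
    using N_adj_poly_root[OF assms] by blast
  have "l \<le> rho (2*n) (N_graph n (k - 2))"
    unfolding rho_def using eigenvalue_adj_N_graph_of_root[OF assms l]
    by (intro eigenvalue_le_largest_eigenvalue[of _ "2*n"]) simp_all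
  with l show ?thesis by simp
qed

section \<open>Signless Laplacian spectral radii\<close>

text \<open>Characteristic polynomials of the quotient matrices of Q(N), on vectors taking the same value
  on X_i and Y_i, and of Q(M) for the partition X1, X2, Y1, Y2.\<close>
definition N_signless_poly :: "nat \<Rightarrow> nat \<Rightarrow> real \<Rightarrow> real" where
  "N_signless_poly n k x =
     (x - real n - (real k - 1)) * (x - (real n - 1) - (real n - real k)) * (x - real k - 1)
     - (real n - real k) * (real k - 1) * (x - real k - 1)
     - (real k - 1) * (x - (real n - 1) - (real n - real k))"

definition M_signless_poly :: "nat \<Rightarrow> nat \<Rightarrow> real \<Rightarrow> real" where
  "M_signless_poly n k x =
     (x - real n) * ((x - real n) * (x - real k) - 2 * real k) * (x - real n + 2)
     - (real n - 2) * ((real n - real k) * ((x - real n) * (x - real k) - 2 * real k)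
                       + real k * (x - real k) * (x - real n + 2))"

lemma M_signless_poly_eq:
  "M_signless_poly n k x = x * N_signless_poly n k x + x * (x - real n) * (x - 2 * real n)"
  unfolding M_signless_poly_def N_signless_poly_def by (simp add: algebra_simps)

lemma N_signless_poly_root:
  assumes "2 \<le> k" "k < n"
  shows "\<exists>l. 2 * real n - 2 < l \<and> l < 2 * real n \<and> N_signless_poly n k l = 0"
proof (rule continuous_sign_change_root)
  have "N_signless_poly n k (2 * real n - 2) = - (2 * (real k - 1) * (real n - 2))"
    unfolding N_signless_poly_def by (simp add: algebra_simps)
  moreover have "2 * (real k - 1) * (real n - 2) > 0" using assms by (intro mult_pos_pos) auto
  ultimately show "N_signless_poly n k (2 * real n - 2) < 0" by simp
  have "N_signless_poly n k (2 * real n) = 4 * real n * (real n - real k)"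
    unfolding N_signless_poly_def by (simp add: algebra_simps)
  then show "N_signless_poly n k (2 * real n) > 0"
    using assms by simp
  show "continuous_on {2 * real n - 2..2 * real n} (N_signless_poly n k)"
    unfolding N_signless_poly_def by (intro continuous_intros)
qed simp

text \<open>The eigenvector for the root l is positive, so l is the largest eigenvalue of Q(N).\<close>
lemma qsl_N_graph_le_root:
  assumes k: "2 \<le> k" "k < n" and l: "2 * real n - 2 < l" "N_signless_poly n k l = 0"
  shows "qsl (2*n) (N_graph n (k - 2)) \<le> l"
proof -
  define h where "h \<beta> = (if \<beta> = 0 \<or> \<beta> = 3 then (real k - 1) * (l - real k - 1)
     else if \<beta> = 1 \<or> \<beta> = 4 then (l - (real n - 1) - (real n - real k)) * (l - real k - 1)
     else (real k - 1) * (l - (real n - 1) - (real n - real k)))" for \<beta> :: nat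
  have h_sym: "h 3 = h 0" "h 4 = h 1" "h 5 = h 2" by (simp_all add: h_def)
  have "real k + 1 \<le> real n" using k by simp
  then have h_pos: "h \<beta> > 0" for \<beta>
    using k l unfolding h_def by (auto intro!: mult_pos_pos)
  have rows: "(real n - 1) * h 0 + (real n - real k) * h 0 + (real k - 1) * h 1 = l * h 0"
    "real n * h 1 + (real n - real k) * h 0 + (real k - 1) * h 1 + h 2 = l * h 1"
    "real k * h 2 + (real k - 1) * h 1 + h 2 = l * h 2"
    using l(2) unfolding h_def N_signless_poly_def by (simp_all add: algebra_simps)
  let ?Q = "deg_mat (2*n) (N_graph n (k - 2)) + adj_mat (2*n) (N_graph n (k - 2))"
  let ?w = "vec (2*n) (\<lambda>j. h (N_part n k j))"
  have Qw: "\<forall>i<2*n. (?Q *\<^sub>v ?w) $ i = l * h (N_part n k i)"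
  proof (intro allI impI)
    fix i assume "i < 2*n"
    then show "(?Q *\<^sub>v ?w) $ i = l * h (N_part n k i)"
      using N_part_cases[of n k i] k rows
      by (elim disjE) (simp_all add: signless_N_graph_mult_part_vec h_sym)
  qed
  have "eigenvalue ?Q l"
    using Qw k h_pos[of "N_part n k 0"] by (intro eigenvalue_vecI[where N = "2*n" and j = 0]) auto
  then show ?thesis
    unfolding qsl_def using Qw h_pos
    by (intro largest_eigenvalue_le_of_positive_supervector[where N = "2*n" and w = ?w])
      (auto simp: adj_mat_def deg_mat_def)
qed

lemma eigenvalue_signless_M_graph_of_root:
  assumes k: "2 \<le> k" "k < n" and m: "real n < m" "M_signless_poly n k m = 0"
  shows "eigenvalue (deg_mat (2*n) (M_graph n n (n - k) 2) + adj_mat (2*n) (M_graph n n (n - k) 2)) m"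
proof -
  define a where "a = (m - real n) * (m - real k) - 2 * real k"
  define g where "g \<beta> = (if \<beta> = 0 then (real n - 2) * a
     else if \<beta> = 1 then (real n - 2) * (m - real k) * (m - real n + 2)
     else if \<beta> = 2 then a * (m - real n + 2) else real k * (real n - 2) * (m - real n + 2))"
    for \<beta> :: nat
  have rows: "(real n - 2) * g 0 + (real n - 2) * g 2 = m * g 0"
    "real n * g 1 + (real n - 2) * g 2 + g 3 + g 4 = m * g 1"
    "real n * g 2 + (real n - real k) * g 0 + real k * g 1 = m * g 2"
    "real k * g 3 + real k * g 1 = m * g 3" "g 4 = g 3"
    using m(2) unfolding g_def a_def M_signless_poly_def by (simp_all add: algebra_simps)
  let ?Q = "deg_mat (2*n) (M_graph n n (n - k) 2) + adj_mat (2*n) (M_graph n n (n - k) 2)"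
  have "(?Q *\<^sub>v vec (2*n) (\<lambda>j. g (M_part n k j))) $ i = m * g (M_part n k i)" if "i < 2*n" for i
    using M_part_cases[of n k i] that k rows
    by (elim disjE) (simp_all add: signless_M_graph_mult_part_vec)
  moreover have "M_part n k (2*n - 1) = 4" unfolding M_part_def using k by presburger
  moreover have "g 4 \<noteq> 0" using k m unfolding g_def by simp
  ultimately show ?thesis
    using k by (intro eigenvalue_vecI[where N = "2*n" and g = "\<lambda>j. g (M_part n k j)" and j = "2*n - 1"])
      auto
qed

lemma qsl_M_graph_gt_root:
  assumes k: "2 \<le> k" "k < n" and l: "2 * real n - 2 < l" "l < 2 * real n" "N_signless_poly n k l = 0"
  shows "l < qsl (2*n) (M_graph n n (n - k) 2)"
proof -
  have n: "real n \<ge> 3" using k by simp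
  have "l * (l - real n) * (l - 2 * real n) < 0"
    using l n by (intro mult_pos_neg mult_pos_pos) auto
  then have "M_signless_poly n k l < 0" using l(3) by (simp add: M_signless_poly_eq)
  moreover have "M_signless_poly n k (3 * real n) > 0"
  proof -
    have "real n * real k \<le> real n * real n" using k by (intro mult_left_mono) auto
    moreover have "real k \<le> real n" "real n * real n \<ge> 0" using k by simp_all
    ultimately have "3 * real n ^ 2 - real n * real k + 6 * real n - 4 * real k > 0"
      using n unfolding power2_eq_square by linarith
    moreover have "M_signless_poly n k (3 * real n)
        = 6 * real n ^ 2 * (3 * real n ^ 2 - real n * real k + 6 * real n - 4 * real k)"
      unfolding M_signless_poly_def by (simp add: algebra_simps power2_eq_square)
    ultimately show ?thesis using n by simp
  qed
  moreover have "continuous_on {l..3 * real n} (M_signless_poly n k)"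
    unfolding M_signless_poly_def by (intro continuous_intros)
  ultimately obtain m where m: "l < m" "m < 3 * real n" "M_signless_poly n k m = 0"
    using continuous_sign_change_root[of l "3 * real n"] l n by auto
  then have "m \<le> qsl (2*n) (M_graph n n (n - k) 2)"
    using eigenvalue_signless_M_graph_of_root[OF k, of m] l n unfolding qsl_def
    by (intro eigenvalue_le_largest_eigenvalue[of _ "2*n"]) auto
  with m show ?thesis by simp
qed

theorem lemma4p1:
  shows "(\<forall>k n :: nat. 2 \<le> k \<and> 2 * k^2 + 3 \<le> n \<longrightarrow>
            rho (2 * n) (N_graph n (k - 2)) > rho (2 * n) (M_graph n n (n - k) 2))
       \<and> (\<forall>k n :: nat. 2 \<le> k \<and> k + 1 \<le> n \<longrightarrow>
            qsl (2 * n) (M_graph n n (n - k) 2) > qsl (2 * n) (N_graph n (k - 2)))"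
proof (intro conjI allI impI)
  fix k n :: nat
  assume "2 \<le> k \<and> 2 * k^2 + 3 \<le> n"
  moreover have "k \<le> k^2" by (simp add: power2_eq_square)
  ultimately have k: "2 \<le> k" "k < n" and n: "2 * k^2 + 3 \<le> n" by linarith+
  have "rho (2 * n) (M_graph n n (n - k) 2) \<le> real n - 1" by (rule rho_M_graph_le[OF k(1) n])
  also have "\<dots> < rho (2 * n) (N_graph n (k - 2))" by (rule rho_N_graph_gt[OF k])
  finally show "rho (2 * n) (N_graph n (k - 2)) > rho (2 * n) (M_graph n n (n - k) 2)" .
next
  fix k n :: nat
  assume "2 \<le> k \<and> k + 1 \<le> n"
  then have k: "2 \<le> k" "k < n" by auto
  obtain l where l: "2 * real n - 2 < l" "l < 2 * real n" "N_signless_poly n k l = 0"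
    using N_signless_poly_root[OF k] by blast
  have "qsl (2 * n) (N_graph n (k - 2)) \<le> l" by (rule qsl_N_graph_le_root[OF k l(1,3)])
  also have "\<dots> < qsl (2 * n) (M_graph n n (n - k) 2)" by (rule qsl_M_graph_gt_root[OF k l])
  finally show "qsl (2 * n) (M_graph n n (n - k) 2) > qsl (2 * n) (N_graph n (k - 2))" .
qed

end
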